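(* Let $W$ be an irreducible euclidean Coxeter group not of type $\widetilde A_n$ and $\sigma$ a chamber of its Coxeter complex, with bipartite faces $F_0,F_1$, bipartite subspaces $B_0,B_1$ and closest points $x_0\in B_0$, $x_1\in B_1$. Then for $i=0,1$, the point $x_i$ lies in the (relative) interior of the face $F_i$. In particular, the bipartite line of $\sigma$ intersects the interior of $\sigma$.
   Context: $W$ acts on a euclidean space $E$, generated by reflections in the facets of a euclidean simplex with dihedral angles submultiples of $\pi$, properly and cocompactly; chambers are images of this simplex. The diagram $\Gamma$ (a tree here) has a unique bipartition, giving a partition $S_0\sqcup S_1$ of the reflections in the facets of $\sigma$; $F_j$ (bipartite face) is the face of $\sigma$ obtained by intersecting $\sigma$ with the hyperplanes of the reflections in $S_j$, and $B_j$ (bipartite subspace) is the affine hull of $F_j$. $B_0,B_1$ are disjoint and $x_0,x_1$ are the unique points realizing the minimal distance between them; the bipartite line is the line through $x_0$ and $x_1$. *)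

theory Defs
  imports "HOL-Analysis.Analysis" "HOL-Library.Extended_Nat"
begin

text \<open>A simplex in a euclidean space of dimension n = DIM('a) is described by its
  n+1 facets, indexed by 0..n: facet i lies in the hyperplane u i \<bullet> x = b i, with
  u i the outward unit normal, and the simplex is the intersection of the half-spaces
  u i \<bullet> x \<le> b i.\<close>

definition simplex_of :: "(nat \<Rightarrow> 'a::euclidean_space) \<Rightarrow> (nat \<Rightarrow> real) \<Rightarrow> 'a set" where
  "simplex_of u b = {x. \<forall>i\<le>DIM('a). u i \<bullet> x \<le> b i}"

definition wall :: "(nat \<Rightarrow> 'a::euclidean_space) \<Rightarrow> (nat \<Rightarrow> real) \<Rightarrow> nat \<Rightarrow> 'a set" where
  "wall u b i = {x. u i \<bullet> x = b i}"

text \<open>Interior dihedral angle between facets i and j (outward unit normals).\<close>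
definition dihedral_angle :: "(nat \<Rightarrow> 'a::euclidean_space) \<Rightarrow> nat \<Rightarrow> nat \<Rightarrow> real" where
  "dihedral_angle u i j = pi - arccos (u i \<bullet> u j)"

definition coxeter_simplex :: "(nat \<Rightarrow> 'a::euclidean_space) \<Rightarrow> (nat \<Rightarrow> real) \<Rightarrow> bool" where
  "coxeter_simplex u b \<longleftrightarrow>
     (\<forall>i\<le>DIM('a). norm (u i) = 1) \<and>
     bounded (simplex_of u b) \<and> interior (simplex_of u b) \<noteq> {} \<and>
     (\<forall>i\<le>DIM('a). \<forall>j\<le>DIM('a). i \<noteq> j \<longrightarrow>
        dihedral_angle u i j = 0 \<or> (\<exists>m::nat. m \<ge> 2 \<and> dihedral_angle u i j = pi / real m))"

definition coxeter_label :: "(nat \<Rightarrow> 'a::euclidean_space) \<Rightarrow> nat \<Rightarrow> nat \<Rightarrow> enat" where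
  "coxeter_label u i j =
     (if dihedral_angle u i j = 0 then \<infinity>
      else enat (THE m. m \<ge> 2 \<and> dihedral_angle u i j = pi / real m))"

definition diagram_edges :: "(nat \<Rightarrow> 'a::euclidean_space) \<Rightarrow> (nat \<times> nat) set" where
  "diagram_edges u = {(i, j). i \<le> DIM('a) \<and> j \<le> DIM('a) \<and> i \<noteq> j \<and> coxeter_label u i j \<ge> 3}"

definition irreducible_diagram :: "(nat \<Rightarrow> 'a::euclidean_space) \<Rightarrow> bool" where
  "irreducible_diagram u \<longleftrightarrow>
     (\<forall>i\<le>DIM('a). \<forall>j\<le>DIM('a). (i, j) \<in> (diagram_edges u)\<^sup>*)"

text \<open>Type affine A_n: for n = 1 two vertices joined by an \<infinity>-edge; for n \<ge> 2 an
  (n+1)-cycle with all labels 3 (all other labels 2).\<close>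
definition type_affine_A :: "(nat \<Rightarrow> 'a::euclidean_space) \<Rightarrow> bool" where
  "type_affine_A u \<longleftrightarrow>
     (DIM('a) = 1 \<and> coxeter_label u 0 1 = \<infinity>) \<or>
     (DIM('a) \<ge> 2 \<and> (\<exists>p. bij_betw p {0..DIM('a)} {0..DIM('a)} \<and>
        (\<forall>k\<le>DIM('a). \<forall>l\<le>DIM('a). k \<noteq> l \<longrightarrow>
           coxeter_label u (p k) (p l) =
             (if l = Suc k mod Suc DIM('a) \<or> k = Suc l mod Suc DIM('a) then 3 else 2))))"

definition diagram_bipartition :: "(nat \<Rightarrow> 'a::euclidean_space) \<Rightarrow> nat set \<Rightarrow> nat set \<Rightarrow> bool" where
  "diagram_bipartition u S0 S1 \<longleftrightarrow>
     S0 \<union> S1 = {0..DIM('a)} \<and> S0 \<inter> S1 = {} \<and>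
     (\<forall>i\<in>S0. \<forall>j\<in>S0. (i, j) \<notin> diagram_edges u) \<and>
     (\<forall>i\<in>S1. \<forall>j\<in>S1. (i, j) \<notin> diagram_edges u)"

definition bipartite_face :: "(nat \<Rightarrow> 'a::euclidean_space) \<Rightarrow> (nat \<Rightarrow> real) \<Rightarrow> nat set \<Rightarrow> 'a set" where
  "bipartite_face u b S = simplex_of u b \<inter> (\<Inter>i\<in>S. wall u b i)"

end

theory Submission
  imports Defs
begin

text \<open>The facet normals of a bounded simplex satisfy a single linear dependence up to scaling,
  and its coefficients can be chosen all positive. Pairing it with the slacks b k - u k \<bullet> x of any
  point gives the same positive number. Normals within one class of the bipartition are pairwise
  orthogonal, since non-adjacent facets meet at a right angle. At the closest points the difference
  x0 - x1 is orthogonal to both bipartite subspaces, so it lies in the span of the normals of either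
  class, with coefficients read off as slacks; subtracting the two expansions shows that the total
  slacks of x0 and x1 form a dependence, hence a positive multiple of the positive one. Positivity of
  the total slacks puts x0 and x1 in the relative interiors of their faces and their midpoint in the
  interior of the simplex.\<close>

lemma norm_minimal_imp_orthogonal:
  fixes v d :: "'a::real_inner"
  assumes "\<forall>t::real. norm v \<le> norm (v + t *\<^sub>R d)"
  shows "v \<bullet> d = 0"
proof (rule ccontr)
  assume vd: "v \<bullet> d \<noteq> 0"
  then have dd: "d \<bullet> d > 0" by auto
  define t where "t = - (v \<bullet> d) / (d \<bullet> d)"
  have "(v + t *\<^sub>R d) \<bullet> (v + t *\<^sub>R d) = v \<bullet> v + t * (2 * (v \<bullet> d) + t * (d \<bullet> d))"
    by (simp add: inner_add_left inner_add_right inner_commute[of d v] algebra_simps)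
  also have "t * (2 * (v \<bullet> d) + t * (d \<bullet> d)) = - (v \<bullet> d)\<^sup>2 / (d \<bullet> d)"
    using dd by (simp add: t_def field_simps power2_eq_square)
  finally have "(v + t *\<^sub>R d) \<bullet> (v + t *\<^sub>R d) = v \<bullet> v - (v \<bullet> d)\<^sup>2 / (d \<bullet> d)" by simp
  then have "norm (v + t *\<^sub>R d) ^ 2 < norm v ^ 2" using vd dd by (simp add: power2_norm_eq_inner)
  then have "norm (v + t *\<^sub>R d) < norm v" by (rule power_less_imp_less_base) simp
  with assms show False by (meson not_le)
qed

lemma closest_pair_orthogonal:
  fixes x0 x1 d :: "'a::real_inner"
  assumes closest: "\<forall>y0\<in>A0. \<forall>y1\<in>A1. dist x0 x1 \<le> dist y0 y1" and "x1 \<in> A1"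
    and line: "\<forall>t. x0 + t *\<^sub>R d \<in> A0"
  shows "(x0 - x1) \<bullet> d = 0"
proof (rule norm_minimal_imp_orthogonal, intro allI)
  fix t :: real
  have "dist x0 x1 \<le> dist (x0 + t *\<^sub>R d) x1" using closest line \<open>x1 \<in> A1\<close> by blast
  then show "norm (x0 - x1) \<le> norm (x0 - x1 + t *\<^sub>R d)" by (simp add: dist_norm algebra_simps)
qed

definition orthonormal_on :: "('i \<Rightarrow> 'a::real_inner) \<Rightarrow> 'i set \<Rightarrow> bool" where
  "orthonormal_on u S \<longleftrightarrow> (\<forall>i\<in>S. \<forall>j\<in>S. u i \<bullet> u j = (if i = j then 1 else 0))"

lemma inner_sum_orthonormal:
  assumes "finite S" "orthonormal_on u S" "j \<in> S"
  shows "u j \<bullet> (\<Sum>i\<in>S. a i *\<^sub>R u i) = a j"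
proof -
  have "u j \<bullet> (\<Sum>i\<in>S. a i *\<^sub>R u i) = (\<Sum>i\<in>S. if i = j then a i else 0)"
    unfolding inner_sum_right using assms(2,3) by (intro sum.cong) (auto simp: orthonormal_on_def)
  also have "\<dots> = a j" using assms(1,3) by simp
  finally show ?thesis .
qed

text \<open>The remainder after projecting onto the family is orthogonal to itself.\<close>

lemma orthonormal_expansion:
  fixes u :: "'i \<Rightarrow> 'a::real_inner"
  assumes "finite S" "orthonormal_on u S"
    and perp: "\<forall>d. (\<forall>i\<in>S. u i \<bullet> d = 0) \<longrightarrow> v \<bullet> d = 0"
  shows "v = (\<Sum>i\<in>S. (u i \<bullet> v) *\<^sub>R u i)"
proof -
  define p where "p = (\<Sum>i\<in>S. (u i \<bullet> v) *\<^sub>R u i)"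
  have "\<forall>i\<in>S. u i \<bullet> (v - p) = 0"
    using inner_sum_orthonormal[OF assms(1,2)] by (simp add: p_def inner_diff_right)
  then have "v \<bullet> (v - p) = 0" "p \<bullet> (v - p) = 0"
    using perp by (auto simp: p_def inner_sum_left inner_commute[of _ "u _"])
  then have "(v - p) \<bullet> (v - p) = 0" by (simp add: inner_diff_left)
  then show ?thesis by (simp add: p_def)
qed

lemma span_image_sum:
  fixes u :: "'i \<Rightarrow> 'a::real_vector"
  assumes "finite S" "v \<in> span (u ` S)"
  obtains a where "v = (\<Sum>i\<in>S. a i *\<^sub>R u i)"
proof -
  have "\<exists>a. v = (\<Sum>i\<in>S. a i *\<^sub>R u i)"
    using assms(2)
  proof (induction rule: span_induct_alt)
    case base
    show ?case by (rule exI[of _ "\<lambda>_. 0"]) simp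
  next
    case (step c x y)
    then obtain j a where j: "j \<in> S" "x = u j" and y: "y = (\<Sum>i\<in>S. a i *\<^sub>R u i)" by blast
    have "(\<Sum>i\<in>S. (if i = j then c else 0) *\<^sub>R u i) = (\<Sum>i\<in>S. if i = j then c *\<^sub>R u j else 0)"
      by (rule sum.cong) auto
    then have "c *\<^sub>R x + y = (\<Sum>i\<in>S. (a i + (if i = j then c else 0)) *\<^sub>R u i)"
      using j y assms(1) by (simp add: scaleR_add_left sum.distrib)
    then show ?case by (rule exI[of _ "\<lambda>i. a i + (if i = j then c else 0)"])
  qed
  then show ?thesis using that by blast
qed

lemma linear_equations_solvable:
  fixes u :: "'i \<Rightarrow> 'a::euclidean_space"
  assumes "finite M" "card M = DIM('a)" "span (u ` M) = UNIV"
  obtains x where "\<forall>k\<in>M. u k \<bullet> x = t k"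
proof -
  have "\<exists>h. bij_betw h (Basis :: 'a set) M"
    using finite_same_card_bij[of "Basis :: 'a set" M] assms(1,2) by simp
  then obtain h where h: "bij_betw h (Basis :: 'a set) M" by blast
  have coord: "(\<Sum>e\<in>Basis. a e *\<^sub>R e) \<bullet> i = a i" if "i \<in> Basis" for a and i :: 'a
    using that by (simp add: inner_sum_left inner_Basis if_distrib[of "\<lambda>r. _ * r"] cong: if_cong)
  define f where "f x = (\<Sum>e\<in>Basis. (u (h e) \<bullet> x) *\<^sub>R e)" for x
  have f_coord: "f x \<bullet> e = u (h e) \<bullet> x" if "e \<in> Basis" for x e
    using coord[OF that] by (simp add: f_def)
  have "linear f"
    by (rule linearI) (simp_all add: f_def inner_add_right scaleR_add_left sum.distrib scaleR_sum_right)
  moreover have "inj f"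
  proof (rule injI)
    fix x y assume "f x = f y"
    then have "u (h e) \<bullet> (x - y) = 0" if "e \<in> Basis" for e
      using f_coord[OF that, of x] f_coord[OF that, of y] by (simp add: inner_diff_right)
    then have "\<forall>k\<in>M. u k \<bullet> (x - y) = 0" using h by (auto simp: bij_betw_def)
    then have "orthogonal (x - y) (u k)" if "k \<in> M" for k
      using that unfolding orthogonal_def by (metis inner_commute)
    then have "orthogonal (x - y) (x - y)"
      by (intro orthogonal_to_span[of "x - y" "u ` M"]) (auto simp: assms(3))
    then show "x = y" by (simp add: orthogonal_def)
  qed
  ultimately have "surj f" by (rule linear_inj_imp_surj)
  then obtain x where x: "f x = (\<Sum>e\<in>Basis. t (h e) *\<^sub>R e)" by (metis surjD)
  have "u k \<bullet> x = t k" if "k \<in> M" for k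
  proof -
    obtain e where e: "e \<in> Basis" "k = h e" using h \<open>k \<in> M\<close> by (auto simp: bij_betw_def)
    show ?thesis using f_coord[OF e(1), of x] coord[OF e(1), of "\<lambda>e. t (h e)"] x e(2) by simp
  qed
  then show ?thesis using that by blast
qed

lemma dependence_slack_sum:
  fixes u :: "'i \<Rightarrow> 'a::real_inner"
  assumes "(\<Sum>k\<in>I. c k *\<^sub>R u k) = 0"
  shows "(\<Sum>k\<in>I. c k * (b k - u k \<bullet> x)) = (\<Sum>k\<in>I. c k * b k)"
proof -
  have "(\<Sum>k\<in>I. c k * (u k \<bullet> x)) = 0"
    using arg_cong[OF assms, of "\<lambda>v. v \<bullet> x"] by (simp add: inner_sum_left)
  then show ?thesis by (simp add: right_diff_distrib sum_subtractf)
qed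

lemma walls_affine: "affine (\<Inter>i\<in>S. wall u b i)"
  by (auto simp: wall_def intro: affine_hyperplane)

lemma affine_hull_bipartite_face_subset:
  "affine hull (bipartite_face u b S) \<subseteq> (\<Inter>i\<in>S. wall u b i)"
  by (rule hull_minimal) (auto simp: bipartite_face_def walls_affine)

lemma open_strict_halfspaces:
  fixes u :: "'i \<Rightarrow> 'a::real_inner"
  assumes "finite T"
  shows "open {x. \<forall>k\<in>T. u k \<bullet> x < b k}"
proof -
  have "{x. \<forall>k\<in>T. u k \<bullet> x < b k} = (\<Inter>k\<in>T. {x. u k \<bullet> x < b k})" by auto
  then show ?thesis using assms by (simp add: open_INT open_halfspace_lt)
qed

lemma walls_strict_subset_bipartite_face:
  fixes u :: "nat \<Rightarrow> 'a::euclidean_space"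
  assumes "S \<subseteq> {..DIM('a)}"
  shows "(\<Inter>i\<in>S. wall u b i) \<inter> {x. \<forall>k\<in>{..DIM('a)} - S. u k \<bullet> x < b k}
    \<subseteq> bipartite_face u b S"
  by (auto simp: bipartite_face_def simplex_of_def wall_def intro: less_imp_le)

lemma mem_rel_interior_bipartite_face:
  fixes u :: "nat \<Rightarrow> 'a::euclidean_space"
  assumes "S \<subseteq> {..DIM('a)}" "x \<in> (\<Inter>i\<in>S. wall u b i)"
    and "\<forall>k\<in>{..DIM('a)} - S. u k \<bullet> x < b k"
  shows "x \<in> rel_interior (bipartite_face u b S)"
  unfolding mem_rel_interior
proof (intro exI conjI)
  let ?O = "{x. \<forall>k\<in>{..DIM('a)} - S. u k \<bullet> x < b k}"
  show "open ?O" by (simp add: open_strict_halfspaces)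
  show "x \<in> ?O \<inter> bipartite_face u b S"
    using assms walls_strict_subset_bipartite_face[of S u b] by blast
  show "?O \<inter> affine hull bipartite_face u b S \<subseteq> bipartite_face u b S"
    using affine_hull_bipartite_face_subset[of u b S] walls_strict_subset_bipartite_face[OF assms(1), of u b]
    by blast
qed

lemma mem_rel_interior_bipartite_face_if_total_slack_pos:
  fixes u :: "nat \<Rightarrow> 'a::euclidean_space"
  assumes "S0 \<union> S1 = {..DIM('a)}" "x0 \<in> (\<Inter>i\<in>S0. wall u b i)" "x1 \<in> (\<Inter>i\<in>S1. wall u b i)"
    and total: "\<forall>k\<le>DIM('a). (b k - u k \<bullet> x0) + (b k - u k \<bullet> x1) > 0"
  shows "x0 \<in> rel_interior (bipartite_face u b S0)"
proof (rule mem_rel_interior_bipartite_face)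
  show "S0 \<subseteq> {..DIM('a)}" using assms(1) by blast
  show "\<forall>k\<in>{..DIM('a)} - S0. u k \<bullet> x0 < b k"
  proof
    fix k assume "k \<in> {..DIM('a)} - S0"
    then have "k \<in> S1" "k \<le> DIM('a)" using assms(1) by auto
    then show "u k \<bullet> x0 < b k" using total assms(3) by (auto simp: wall_def)
  qed
qed (fact assms(2))

text \<open>At closest points, x0 - x1 is orthogonal to both flats, so it expands in the normals of
  either class. Its coefficient on a normal of S0 is the slack of x1 there, on a normal of S1 minus
  the slack of x0; subtracting the two expansions yields the total slack dependence.\<close>

lemma closest_points_total_slack_dependence:
  fixes u :: "nat \<Rightarrow> 'a::euclidean_space"
  assumes part: "S0 \<union> S1 = {..DIM('a)}" "S0 \<inter> S1 = {}"
    and orth: "orthonormal_on u S0" "orthonormal_on u S1"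
    and x0: "x0 \<in> (\<Inter>i\<in>S0. wall u b i)" and x1: "x1 \<in> (\<Inter>i\<in>S1. wall u b i)"
    and closest: "\<forall>y0\<in>(\<Inter>i\<in>S0. wall u b i). \<forall>y1\<in>(\<Inter>i\<in>S1. wall u b i). dist x0 x1 \<le> dist y0 y1"
  shows "(\<Sum>k\<le>DIM('a). ((b k - u k \<bullet> x0) + (b k - u k \<bullet> x1)) *\<^sub>R u k) = 0"
proof -
  have fin: "finite S0" "finite S1" using part(1) by (metis finite_Un finite_atMost)+
  have "(x0 - x1) \<bullet> d = 0" if "\<forall>i\<in>S0. u i \<bullet> d = 0" for d
    using closest x1 x0 that by (intro closest_pair_orthogonal) (auto simp: wall_def inner_add_right)
  then have exp0: "x0 - x1 = (\<Sum>i\<in>S0. (u i \<bullet> (x0 - x1)) *\<^sub>R u i)"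
    using orthonormal_expansion[OF fin(1) orth(1)] by blast
  have "\<forall>y1\<in>(\<Inter>i\<in>S1. wall u b i). \<forall>y0\<in>(\<Inter>i\<in>S0. wall u b i). dist x1 x0 \<le> dist y1 y0"
  proof (intro ballI)
    fix y1 y0 assume "y1 \<in> (\<Inter>i\<in>S1. wall u b i)" "y0 \<in> (\<Inter>i\<in>S0. wall u b i)"
    then show "dist x1 x0 \<le> dist y1 y0" using closest by (metis dist_commute)
  qed
  then have "(x1 - x0) \<bullet> d = 0" if "\<forall>i\<in>S1. u i \<bullet> d = 0" for d
    using x0 x1 that by (intro closest_pair_orthogonal) (auto simp: wall_def inner_add_right)
  then have exp1: "x1 - x0 = (\<Sum>i\<in>S1. (u i \<bullet> (x1 - x0)) *\<^sub>R u i)"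
    using orthonormal_expansion[OF fin(2) orth(2)] by blast
  define d where "d k = (b k - u k \<bullet> x0) + (b k - u k \<bullet> x1)" for k
  have "(\<Sum>k\<in>S0. d k *\<^sub>R u k) = x0 - x1"
    by (subst exp0) (rule sum.cong, use x0 in \<open>simp_all add: d_def wall_def inner_diff_right\<close>)
  moreover have "(\<Sum>k\<in>S1. d k *\<^sub>R u k) = x1 - x0"
    by (subst exp1) (rule sum.cong, use x1 in \<open>simp_all add: d_def wall_def inner_diff_right\<close>)
  ultimately have "(\<Sum>k\<le>DIM('a). d k *\<^sub>R u k) = 0"
    using fin part by (simp add: part(1)[symmetric] sum.union_disjoint)
  then show ?thesis by (simp only: d_def)
qed

locale bounded_simplex =
  fixes u :: "nat \<Rightarrow> 'a::euclidean_space" and b :: "nat \<Rightarrow> real"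
  assumes bounded: "bounded (simplex_of u b)"
    and interior_nonempty: "interior (simplex_of u b) \<noteq> {}"
begin

lemma recession_direction_zero:
  assumes "\<forall>k\<le>DIM('a). u k \<bullet> w \<le> 0"
  shows "w = 0"
proof (rule ccontr)
  assume "w \<noteq> 0"
  obtain p where p: "p \<in> simplex_of u b" using interior_nonempty interior_subset by blast
  obtain B where B: "\<forall>x\<in>simplex_of u b. norm x \<le> B" using bounded bounded_iff by blast
  define t where "t = (B + norm p + 1) / norm w"
  have "B \<ge> 0" using B p norm_ge_zero order_trans by blast
  then have "t \<ge> 0" by (simp add: t_def)
  have "u k \<bullet> (p + t *\<^sub>R w) \<le> b k" if "k \<le> DIM('a)" for k
  proof -
    have "t * (u k \<bullet> w) \<le> 0" using \<open>t \<ge> 0\<close> assms that by (simp add: mult_nonneg_nonpos)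
    moreover have "u k \<bullet> p \<le> b k" using p that by (simp add: simplex_of_def)
    ultimately show ?thesis by (simp add: inner_add_right)
  qed
  then have "p + t *\<^sub>R w \<in> simplex_of u b" by (simp add: simplex_of_def)
  then have "norm (p + t *\<^sub>R w) \<le> B" using B by blast
  moreover have "norm (t *\<^sub>R w) = B + norm p + 1"
    using \<open>w \<noteq> 0\<close> \<open>B \<ge> 0\<close> by (simp add: t_def)
  moreover have "norm (t *\<^sub>R w) \<le> norm (p + t *\<^sub>R w) + norm p"
    by (metis add_diff_cancel_left' norm_triangle_ineq4)
  ultimately show False by linarith
qed

lemma span_facet_normals_but_one:
  assumes "j \<le> DIM('a)"
  shows "span (u ` ({..DIM('a)} - {j})) = UNIV"
proof (rule ccontr)
  assume "span (u ` ({..DIM('a)} - {j})) \<noteq> UNIV"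
  then obtain w where "w \<noteq> 0" and w: "\<forall>x\<in>span (u ` ({..DIM('a)} - {j})). w \<bullet> x = 0"
    using span_not_UNIV_orthogonal by blast
  have perp: "u k \<bullet> w = 0" if "k \<le> DIM('a)" "k \<noteq> j" for k
  proof -
    have "u k \<in> span (u ` ({..DIM('a)} - {j}))" using that by (intro span_base) auto
    then have "w \<bullet> u k = 0" using w by blast
    then show ?thesis by (simp add: inner_commute)
  qed
  text \<open>Either w or -w is a direction of recession.\<close>
  have "\<forall>k\<le>DIM('a). u k \<bullet> (if u j \<bullet> w \<le> 0 then w else - w) \<le> 0"
  proof (intro allI impI)
    fix k assume "k \<le> DIM('a)"
    then show "u k \<bullet> (if u j \<bullet> w \<le> 0 then w else - w) \<le> 0" using perp[of k] by (cases "k = j") auto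
  qed
  then have "(if u j \<bullet> w \<le> 0 then w else - w) = 0" by (rule recession_direction_zero)
  with \<open>w \<noteq> 0\<close> show False by (simp split: if_splits)
qed

lemma facet_equations_solvable:
  assumes "j \<le> DIM('a)"
  obtains x where "\<forall>k\<in>{..DIM('a)} - {j}. u k \<bullet> x = t k"
  using linear_equations_solvable[OF _ _ span_facet_normals_but_one[OF assms]] assms by auto

lemma dependence_zero_if_zero_coefficient:
  assumes dep: "(\<Sum>k\<le>DIM('a). e k *\<^sub>R u k) = 0" and "j \<le> DIM('a)" "e j = 0"
  shows "\<forall>k\<le>DIM('a). e k = 0"
proof -
  obtain w where w: "\<forall>k\<in>{..DIM('a)} - {j}. u k \<bullet> w = e k"
    using facet_equations_solvable[OF assms(2), of e] by blast
  have "(\<Sum>k\<le>DIM('a). e k * e k) = (\<Sum>k\<le>DIM('a). e k * (u k \<bullet> w))"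
  proof (rule sum.cong)
    fix k assume "k \<in> {..DIM('a)}"
    then show "e k * e k = e k * (u k \<bullet> w)" using w assms(3) by (cases "k = j") auto
  qed simp
  also have "\<dots> = 0" using arg_cong[OF dep, of "\<lambda>v. v \<bullet> w"] by (simp add: inner_sum_left)
  finally show ?thesis by (simp add: sum_nonneg_eq_0_iff)
qed

lemma dependence_with_unit_coefficient:
  obtains c where "c 0 = 1" "(\<Sum>k\<le>DIM('a). c k *\<^sub>R u k) = 0"
proof -
  let ?M = "{..DIM('a)} - {0}"
  have "u 0 \<in> span (u ` ?M)" using span_facet_normals_but_one[of 0] by simp
  then obtain a where a: "u 0 = (\<Sum>k\<in>?M. a k *\<^sub>R u k)"
    using span_image_sum[of ?M "u 0" u] by blast
  define c where "c k = (if k = 0 then 1 else - a k)" for k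
  have "(\<Sum>k\<le>DIM('a). c k *\<^sub>R u k) = c 0 *\<^sub>R u 0 + (\<Sum>k\<in>?M. c k *\<^sub>R u k)"
    by (intro sum.remove) auto
  also have "(\<Sum>k\<in>?M. c k *\<^sub>R u k) = (\<Sum>k\<in>?M. - (a k *\<^sub>R u k))"
    by (rule sum.cong) (auto simp: c_def)
  also have "\<dots> = - u 0" by (simp only: sum_negf a[symmetric])
  finally have dep: "(\<Sum>k\<le>DIM('a). c k *\<^sub>R u k) = 0" by (simp add: c_def)
  have "c 0 = 1" by (simp add: c_def)
  then show ?thesis using dep by (rule that)
qed

lemma dependence_positive:
  assumes dep: "(\<Sum>k\<le>DIM('a). c k *\<^sub>R u k) = 0" and "c 0 > 0" and m: "m \<le> DIM('a)"
  shows "c m > 0"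
proof (rule ccontr)
  assume "\<not> c m > 0"
  have "m \<noteq> 0"
  proof
    assume "m = 0"
    then show False using \<open>c 0 > 0\<close> \<open>\<not> c m > 0\<close> by simp
  qed
  let ?M = "{..DIM('a)} - {0}"
  text \<open>Pairing the dependence with w gives c 0 * (u 0 \<bullet> w) = c m, so w is a direction of
    recession.\<close>
  obtain w where w: "\<forall>k\<in>?M. u k \<bullet> w = (if k = m then -1 else 0)"
    using facet_equations_solvable[of 0 "\<lambda>k. if k = m then -1 else 0"] by blast
  have "(\<Sum>k\<in>?M. c k * (u k \<bullet> w)) = (\<Sum>k\<in>?M. if k = m then - c m else 0)"
    using w by (intro sum.cong) auto
  also have "\<dots> = - c m" using m \<open>m \<noteq> 0\<close> by simp
  finally have "(\<Sum>k\<in>?M. c k * (u k \<bullet> w)) = - c m" .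
  moreover have "(\<Sum>k\<le>DIM('a). c k * (u k \<bullet> w)) = c 0 * (u 0 \<bullet> w) + (\<Sum>k\<in>?M. c k * (u k \<bullet> w))"
    by (intro sum.remove) auto
  moreover have "(\<Sum>k\<le>DIM('a). c k * (u k \<bullet> w)) = 0"
    using arg_cong[OF dep, of "\<lambda>v. v \<bullet> w"] by (simp add: inner_sum_left)
  ultimately have "c 0 * (u 0 \<bullet> w) \<le> 0" using \<open>\<not> c m > 0\<close> by simp
  then have "u 0 \<bullet> w \<le> 0" using \<open>c 0 > 0\<close> by (simp add: mult_le_0_iff)
  have "\<forall>k\<le>DIM('a). u k \<bullet> w \<le> 0"
  proof (intro allI impI)
    fix k assume "k \<le> DIM('a)"
    then show "u k \<bullet> w \<le> 0" using w \<open>u 0 \<bullet> w \<le> 0\<close> by (cases "k = 0") auto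
  qed
  then have "w = 0" by (rule recession_direction_zero)
  then show False using w[rule_format, of m] m \<open>m \<noteq> 0\<close> by simp
qed

lemma positive_dependence_exists:
  obtains c where "\<forall>k\<le>DIM('a). c k > 0" "(\<Sum>k\<le>DIM('a). c k *\<^sub>R u k) = 0"
proof -
  obtain c where c: "c 0 = 1" "(\<Sum>k\<le>DIM('a). c k *\<^sub>R u k) = 0"
    by (rule dependence_with_unit_coefficient)
  have "\<forall>k\<le>DIM('a). c k > 0" using dependence_positive[OF c(2)] c(1) by simp
  then show ?thesis using c(2) by (rule that)
qed

lemma dependence_proportional:
  assumes c: "\<forall>k\<le>DIM('a). c k > 0" "(\<Sum>k\<le>DIM('a). c k *\<^sub>R u k) = 0"
    and e: "(\<Sum>k\<le>DIM('a). e k *\<^sub>R u k) = 0"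
  obtains l where "\<forall>k\<le>DIM('a). e k = l * c k"
proof -
  define l where "l = e 0 / c 0"
  have "(\<Sum>k\<le>DIM('a). (e k - l * c k) *\<^sub>R u k)
      = (\<Sum>k\<le>DIM('a). e k *\<^sub>R u k) - l *\<^sub>R (\<Sum>k\<le>DIM('a). c k *\<^sub>R u k)"
    by (simp only: scaleR_diff_left scaleR_scaleR[symmetric] sum_subtractf scaleR_sum_right)
  then have dep: "(\<Sum>k\<le>DIM('a). (e k - l * c k) *\<^sub>R u k) = 0" using c e by simp
  have e0: "e 0 - l * c 0 = 0" using c(1)[rule_format, of 0] by (simp add: l_def)
  have "\<forall>k\<le>DIM('a). e k - l * c k = 0"
    by (rule dependence_zero_if_zero_coefficient[OF dep _ e0]) simp
  then have "\<forall>k\<le>DIM('a). e k = l * c k" by simp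
  then show ?thesis by (rule that)
qed

lemma interior_point_off_some_wall:
  assumes "p \<in> interior (simplex_of u b)"
  obtains k where "k \<le> DIM('a)" "u k \<bullet> p < b k"
proof (rule ccontr)
  assume "\<not> thesis"
  then have walls: "\<forall>k\<le>DIM('a). u k \<bullet> p = b k"
    using that assms interior_subset by (fastforce simp: simplex_of_def)
  obtain e where "e > 0" "ball p e \<subseteq> simplex_of u b" using assms mem_interior by blast
  obtain v :: 'a where v: "v \<in> Basis" using nonempty_Basis by blast
  have "p + (e / 2) *\<^sub>R v \<in> simplex_of u b"
    using \<open>e > 0\<close> \<open>ball p e \<subseteq> _\<close> v by (auto simp: dist_norm)
  then have "\<forall>k\<le>DIM('a). u k \<bullet> v \<le> 0"
    using walls \<open>e > 0\<close> by (auto simp: simplex_of_def inner_add_right mult_le_0_iff)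
  then have "v = 0" by (rule recession_direction_zero)
  with v show False by simp
qed

lemma positive_dependence_pairing_pos:
  assumes c: "\<forall>k\<le>DIM('a). c k > 0" "(\<Sum>k\<le>DIM('a). c k *\<^sub>R u k) = 0"
  shows "(\<Sum>k\<le>DIM('a). c k * b k) > 0"
proof -
  obtain p where p: "p \<in> interior (simplex_of u b)" using interior_nonempty by blast
  then obtain j where j: "j \<le> DIM('a)" "u j \<bullet> p < b j" by (rule interior_point_off_some_wall)
  have slack: "\<forall>k\<le>DIM('a). b k - u k \<bullet> p \<ge> 0"
    using p interior_subset by (fastforce simp: simplex_of_def)
  have "0 < c j * (b j - u j \<bullet> p)" using c j by simp
  also have "\<dots> \<le> (\<Sum>k\<le>DIM('a). c k * (b k - u k \<bullet> p))"
    using c slack j by (intro member_le_sum) (auto intro: less_imp_le)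
  also have "\<dots> = (\<Sum>k\<le>DIM('a). c k * b k)" by (rule dependence_slack_sum[OF c(2)])
  finally show ?thesis .
qed

lemma not_on_all_walls: "\<not> (\<forall>k\<le>DIM('a). u k \<bullet> x = b k)"
proof
  assume "\<forall>k\<le>DIM('a). u k \<bullet> x = b k"
  moreover obtain c where c: "\<forall>k\<le>DIM('a). c k > 0" "(\<Sum>k\<le>DIM('a). c k *\<^sub>R u k) = 0"
    by (rule positive_dependence_exists)
  ultimately show False
    using dependence_slack_sum[OF c(2), of b x] positive_dependence_pairing_pos[OF c] by simp
qed

lemma slacks_realizable:
  assumes c: "\<forall>k\<le>DIM('a). c k > 0" "(\<Sum>k\<le>DIM('a). c k *\<^sub>R u k) = 0"
    and \<sigma>: "(\<Sum>k\<le>DIM('a). c k * \<sigma> k) = (\<Sum>k\<le>DIM('a). c k * b k)"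
  obtains y where "\<forall>k\<le>DIM('a). b k - u k \<bullet> y = \<sigma> k"
proof -
  let ?M = "{..DIM('a)} - {0}"
  obtain y where y: "\<forall>k\<in>?M. u k \<bullet> y = b k - \<sigma> k"
    using facet_equations_solvable[of 0 "\<lambda>k. b k - \<sigma> k"] by blast
  have "(\<Sum>k\<in>?M. c k * (b k - u k \<bullet> y)) = (\<Sum>k\<in>?M. c k * \<sigma> k)"
    using y by (intro sum.cong) auto
  moreover have "c 0 * (b 0 - u 0 \<bullet> y) + (\<Sum>k\<in>?M. c k * (b k - u k \<bullet> y))
      = c 0 * \<sigma> 0 + (\<Sum>k\<in>?M. c k * \<sigma> k)"
    using dependence_slack_sum[OF c(2), of b y] \<sigma> by (simp add: sum.remove[of _ 0])
  ultimately have "b 0 - u 0 \<bullet> y = \<sigma> 0" using c(1)[rule_format, of 0] by simp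
  have "\<forall>k\<le>DIM('a). b k - u k \<bullet> y = \<sigma> k"
  proof (intro allI impI)
    fix k assume "k \<le> DIM('a)"
    then show "b k - u k \<bullet> y = \<sigma> k"
      using y[rule_format, of k] \<open>b 0 - u 0 \<bullet> y = \<sigma> 0\<close> by (cases "k = 0") simp_all
  qed
  then show ?thesis by (rule that)
qed

text \<open>Equal slack on all facets outside S, scaled to fit the only linear relation among slacks.\<close>

lemma bipartite_face_point_off_other_walls:
  assumes "S \<subseteq> {..DIM('a)}" "S \<noteq> {..DIM('a)}"
  obtains y where "y \<in> (\<Inter>i\<in>S. wall u b i)" "\<forall>k\<in>{..DIM('a)} - S. u k \<bullet> y < b k"
proof -
  obtain c where c: "\<forall>k\<le>DIM('a). c k > 0" "(\<Sum>k\<le>DIM('a). c k *\<^sub>R u k) = 0"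
    by (rule positive_dependence_exists)
  let ?T = "{..DIM('a)} - S"
  obtain j where "j \<in> ?T" using assms by blast
  then have cT: "(\<Sum>k\<in>?T. c k) > 0" using c(1) by (intro sum_pos2) auto
  define s where "s = (\<Sum>k\<le>DIM('a). c k * b k) / (\<Sum>k\<in>?T. c k)"
  have "s > 0" using positive_dependence_pairing_pos[OF c] cT by (simp add: s_def)
  define \<sigma> where "\<sigma> k = (if k \<in> S then 0 else s)" for k
  have "(\<Sum>k\<le>DIM('a). c k * \<sigma> k) = (\<Sum>k\<in>?T. c k * \<sigma> k)"
    by (rule sum.mono_neutral_right) (auto simp: \<sigma>_def)
  also have "\<dots> = (\<Sum>k\<in>?T. c k * s)" by (rule sum.cong) (auto simp: \<sigma>_def)
  also have "\<dots> = (\<Sum>k\<in>?T. c k) * s" by (simp add: sum_distrib_right)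
  also have "\<dots> = (\<Sum>k\<le>DIM('a). c k * b k)" using cT by (simp add: s_def)
  finally obtain y where y: "\<forall>k\<le>DIM('a). b k - u k \<bullet> y = \<sigma> k"
    using slacks_realizable[OF c, of \<sigma>] by blast
  have "u i \<bullet> y = b i" if "i \<in> S" for i
  proof -
    have "i \<le> DIM('a)" using assms(1) that by auto
    then show ?thesis using y[rule_format, of i] that by (simp add: \<sigma>_def)
  qed
  then have "y \<in> (\<Inter>i\<in>S. wall u b i)" by (simp add: wall_def)
  moreover have "\<forall>k\<in>?T. u k \<bullet> y < b k"
  proof
    fix k assume "k \<in> ?T"
    then show "u k \<bullet> y < b k" using y[rule_format, of k] \<open>s > 0\<close> by (simp add: \<sigma>_def)
  qed
  ultimately show ?thesis by (rule that)
qed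

lemma affine_hull_bipartite_face:
  assumes "S \<subseteq> {..DIM('a)}"
  shows "affine hull (bipartite_face u b S) = (\<Inter>i\<in>S. wall u b i)"
proof (cases "S = {..DIM('a)}")
  case True
  have "x \<notin> (\<Inter>i\<in>S. wall u b i)" for x
    using not_on_all_walls[of x] True by (auto simp: wall_def)
  then show ?thesis using affine_hull_bipartite_face_subset[of u b S] by blast
next
  case False
  let ?W = "\<Inter>i\<in>S. wall u b i" and ?O = "{x. \<forall>k\<in>{..DIM('a)} - S. u k \<bullet> x < b k}"
  obtain y where "y \<in> ?W" "\<forall>k\<in>{..DIM('a)} - S. u k \<bullet> y < b k"
    by (rule bipartite_face_point_off_other_walls[OF assms False])
  then have "?W \<inter> ?O \<noteq> {}" by blast
  then have "affine hull (?W \<inter> ?O) = affine hull ?W"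
    by (intro affine_hull_affine_Int_open walls_affine open_strict_halfspaces) simp
  then have "affine hull (?W \<inter> ?O) = ?W" by (simp add: walls_affine)
  then have "?W \<subseteq> affine hull (bipartite_face u b S)"
    using hull_mono[OF walls_strict_subset_bipartite_face[OF assms]] by blast
  then show ?thesis using affine_hull_bipartite_face_subset by blast
qed

lemma interior_simplexI:
  assumes "\<forall>k\<le>DIM('a). u k \<bullet> x < b k"
  shows "x \<in> interior (simplex_of u b)"
proof -
  have "x \<in> rel_interior (bipartite_face u b {})"
    using assms by (intro mem_rel_interior_bipartite_face) auto
  then show ?thesis
    using rel_interior_nonempty_interior[OF interior_nonempty] by (simp add: bipartite_face_def)
qed

lemma total_slack_dependence_pos:
  assumes dep: "(\<Sum>k\<le>DIM('a). ((b k - u k \<bullet> x0) + (b k - u k \<bullet> x1)) *\<^sub>R u k) = 0"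
  shows "\<forall>k\<le>DIM('a). (b k - u k \<bullet> x0) + (b k - u k \<bullet> x1) > 0"
proof -
  define d where "d k = (b k - u k \<bullet> x0) + (b k - u k \<bullet> x1)" for k
  obtain c where c: "\<forall>k\<le>DIM('a). c k > 0" "(\<Sum>k\<le>DIM('a). c k *\<^sub>R u k) = 0"
    by (rule positive_dependence_exists)
  obtain l where l: "\<forall>k\<le>DIM('a). d k = l * c k"
    using dependence_proportional[OF c dep[folded d_def]] by blast
  have "(\<Sum>k\<le>DIM('a). c k * d k)
      = (\<Sum>k\<le>DIM('a). c k * (b k - u k \<bullet> x0)) + (\<Sum>k\<le>DIM('a). c k * (b k - u k \<bullet> x1))"
    unfolding d_def distrib_left sum.distrib ..
  also have "\<dots> = 2 * (\<Sum>k\<le>DIM('a). c k * b k)"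
    using dependence_slack_sum[OF c(2), of b x0] dependence_slack_sum[OF c(2), of b x1] by simp
  also have "\<dots> > 0" using positive_dependence_pairing_pos[OF c] by simp
  finally have "l * (\<Sum>k\<le>DIM('a). c k * c k) > 0"
    using l by (simp add: sum_distrib_left mult.left_commute)
  moreover have "(\<Sum>k\<le>DIM('a). c k * c k) \<ge> 0" by (intro sum_nonneg) simp
  ultimately have "l > 0" by (auto simp: zero_less_mult_iff)
  then show ?thesis using l c by (simp add: d_def[symmetric])
qed
end

lemma coxeter_simplex_orthonormal_on:
  fixes u :: "nat \<Rightarrow> 'a::euclidean_space"
  assumes cs: "coxeter_simplex u b" and S: "S \<subseteq> {..DIM('a)}"
    and no_edge: "\<forall>i\<in>S. \<forall>j\<in>S. (i, j) \<notin> diagram_edges u"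
  shows "orthonormal_on u S"
  unfolding orthonormal_on_def
proof (intro ballI)
  fix i j assume ij: "i \<in> S" "j \<in> S"
  then have ijN: "i \<le> DIM('a)" "j \<le> DIM('a)" using S by auto
  then have unit: "norm (u i) = 1" "norm (u j) = 1" using cs by (auto simp: coxeter_simplex_def)
  show "u i \<bullet> u j = (if i = j then 1 else 0)"
  proof (cases "i = j")
    case True
    then show ?thesis using unit by (simp add: norm_eq_1)
  next
    case False
    have label: "\<not> coxeter_label u i j \<ge> 3" using no_edge ij S False by (auto simp: diagram_edges_def)
    have "dihedral_angle u i j = 0 \<or> (\<exists>m::nat. m \<ge> 2 \<and> dihedral_angle u i j = pi / real m)"
      using cs ijN False unfolding coxeter_simplex_def by blast
    moreover have "dihedral_angle u i j \<noteq> 0" using label by (auto simp: coxeter_label_def)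
    ultimately obtain m :: nat where m: "m \<ge> 2" "dihedral_angle u i j = pi / real m" by blast
    have "(THE m'. m' \<ge> 2 \<and> dihedral_angle u i j = pi / real m') = m"
    proof (rule the_equality)
      fix m' :: nat assume "m' \<ge> 2 \<and> dihedral_angle u i j = pi / real m'"
      then have "pi / real m' = pi / real m" using m by simp
      then show "m' = m" by (simp add: divide_cancel_left)
    qed (use m in simp)
    then have "coxeter_label u i j = enat m"
      using \<open>dihedral_angle u i j \<noteq> 0\<close> by (simp add: coxeter_label_def)
    then have "m = 2" using label m by (simp add: not_le)
    then have right_angle: "arccos (u i \<bullet> u j) = pi / 2" using m by (simp add: dihedral_angle_def)
    have "\<bar>u i \<bullet> u j\<bar> \<le> 1" using Cauchy_Schwarz_ineq2[of "u i" "u j"] unit by simp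
    then have "u i \<bullet> u j = cos (arccos (u i \<bullet> u j))" by (simp add: cos_arccos abs_le_iff)
    also have "\<dots> = 0" by (simp add: right_angle)
    finally show ?thesis using False by simp
  qed
qed

theorem lemma8p5:
  fixes u :: "nat \<Rightarrow> 'a::euclidean_space" and b :: "nat \<Rightarrow> real"
    and S0 S1 :: "nat set" and x0 x1 :: 'a
  assumes "coxeter_simplex u b"
    and "irreducible_diagram u"
    and "\<not> type_affine_A u"
    and "diagram_bipartition u S0 S1"
    and "x0 \<in> affine hull (bipartite_face u b S0)"
    and "x1 \<in> affine hull (bipartite_face u b S1)"
    and "\<forall>y0\<in>affine hull (bipartite_face u b S0). \<forall>y1\<in>affine hull (bipartite_face u b S1).
           dist x0 x1 \<le> dist y0 y1"
  shows "x0 \<in> rel_interior (bipartite_face u b S0)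
       \<and> x1 \<in> rel_interior (bipartite_face u b S1)
       \<and> (\<exists>t::real. x0 + t *\<^sub>R (x1 - x0) \<in> interior (simplex_of u b))"
proof -
  interpret bounded_simplex u b using assms(1) by unfold_locales (auto simp: coxeter_simplex_def)
  have part: "S0 \<union> S1 = {..DIM('a)}" "S0 \<inter> S1 = {}" and S: "S0 \<subseteq> {..DIM('a)}" "S1 \<subseteq> {..DIM('a)}"
    using assms(4) by (auto simp: diagram_bipartition_def atLeast0AtMost)
  note hulls = affine_hull_bipartite_face[OF S(1)] affine_hull_bipartite_face[OF S(2)]
  have orth: "orthonormal_on u S0" "orthonormal_on u S1"
    using assms(1,4) S by (auto intro: coxeter_simplex_orthonormal_on simp: diagram_bipartition_def)
  have x0: "x0 \<in> (\<Inter>i\<in>S0. wall u b i)" and x1: "x1 \<in> (\<Inter>i\<in>S1. wall u b i)"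
    using assms(5,6) hulls by auto
  have slack: "\<forall>k\<le>DIM('a). (b k - u k \<bullet> x0) + (b k - u k \<bullet> x1) > 0"
    using total_slack_dependence_pos closest_points_total_slack_dependence[OF part orth x0 x1]
      assms(7) hulls by simp
  have r0: "x0 \<in> rel_interior (bipartite_face u b S0)"
    by (rule mem_rel_interior_bipartite_face_if_total_slack_pos[OF part(1) x0 x1 slack])
  have r1: "x1 \<in> rel_interior (bipartite_face u b S1)"
    using mem_rel_interior_bipartite_face_if_total_slack_pos[of S1 S0 x1 u b x0] part(1) x0 x1 slack
    by (simp add: Un_commute add.commute)
  have "x0 + (1/2) *\<^sub>R (x1 - x0) \<in> interior (simplex_of u b)"
  proof (intro interior_simplexI allI impI)
    fix k assume "k \<le> DIM('a)"
    then show "u k \<bullet> (x0 + (1/2) *\<^sub>R (x1 - x0)) < b k"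
      using slack[rule_format, of k] by (simp add: inner_add_right inner_diff_right field_simps)
  qed
  then show ?thesis using r0 r1 by blast
qed

end
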